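(* There is an algorithm which, given as input an automatic structure for a semigroup $S$ (without an assignment of generators), decides whether $S$ is right cancellative.
   Context: Let $A$ be a finite alphabet, $\$ \notin A$, and let $\delta$ send a pair of words over $A$ to the word over $(A\cup\{\$\})\times(A\cup\{\$\})$ obtained by padding the shorter word on the right with $\$$ and reading both letter by letter. A synchronous automaton recognises a relation $R$ if it accepts exactly $\delta(R)$. A pre-automatic structure $\Gamma$ consists of a finite alphabet $A$, a finite automaton recognising $L\subseteq A^*$, a synchronous automaton recognising $L_=\subseteq L\times L$, and for each $a\in A$ a synchronous automaton recognising $L_a\subseteq L\times L$. An interpretation with respect to a semigroup $S$ is a morphism $\sigma:A^*\to S$ with $\sigma(L)=S$ such that for $u,v\in L$: $(u,v)\in L_=$ iff $\sigma(u)=\sigma(v)$, and $(u,v)\in L_a$ iff $\sigma(ua)=\sigma(v)$. $\Gamma$ is an automatic structure for $S$ if it admits an interpretation with respect to $S$; it is input to an algorithm as its finite collection of automata. A semigroup is right cancellative if $xs=ys$ implies $x=y$ for all $x,y,s$. *)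

theory Defs
  imports Main "HOL-Library.Nat_Bijection"
begin

datatype recf =
    Zero
  | Succ
  | Proj nat
  | Comp recf "recf list"
  | Prim recf recf
  | Mn recf

inductive eval :: "recf \<Rightarrow> nat list \<Rightarrow> nat \<Rightarrow> bool" where
  eval_Zero: "eval Zero xs 0"
| eval_Succ: "eval Succ (x # xs) (Suc x)"
| eval_Proj: "i < length xs \<Longrightarrow> eval (Proj i) xs (xs ! i)"
| eval_Comp: "list_all2 (\<lambda>g y. eval g xs y) gs ys \<Longrightarrow> eval f ys r \<Longrightarrow> eval (Comp f gs) xs r"
| eval_Prim0: "eval f xs r \<Longrightarrow> eval (Prim f g) (0 # xs) r"
| eval_PrimS: "eval (Prim f g) (n # xs) r \<Longrightarrow> eval g (n # r # xs) r'
      \<Longrightarrow> eval (Prim f g) (Suc n # xs) r'"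
| eval_Mn: "eval f (n # xs) 0 \<Longrightarrow> (\<forall>m<n. \<exists>r. eval f (m # xs) r \<and> r > 0)
      \<Longrightarrow> eval (Mn f) xs n"

text \<open>A (nondeterministic) finite automaton over letters of type 'l:
  (initial states, final states, transitions). States are natural numbers.\<close>
type_synonym 'l nfa = "nat list \<times> nat list \<times> (nat \<times> 'l \<times> nat) list"

fun nfa_reach :: "(nat \<times> 'l \<times> nat) list \<Rightarrow> nat set \<Rightarrow> 'l list \<Rightarrow> nat set" where
  "nfa_reach T Q [] = Q"
| "nfa_reach T Q (a # w) = nfa_reach T {q'. \<exists>q\<in>Q. (q, a, q') \<in> set T} w"

definition nfa_accepts :: "'l nfa \<Rightarrow> 'l list \<Rightarrow> bool" where
  "nfa_accepts M w = (case M of (I, F, T) \<Rightarrow> nfa_reach T (set I) w \<inter> set F \<noteq> {})"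

definition nfa_lang :: "'l nfa \<Rightarrow> 'l list set" where
  "nfa_lang M = {w. nfa_accepts M w}"

text \<open>Letters of synchronous automata: pairs over A \<union> {$}; None plays the role of $.\<close>
type_synonym pletter = "nat option \<times> nat option"

definition conv :: "nat list \<Rightarrow> nat list \<Rightarrow> pletter list" where
  "conv u v = zip (map Some u @ replicate (length v - length u) None)
                  (map Some v @ replicate (length u - length v) None)"

definition sync_rel :: "pletter nfa \<Rightarrow> (nat list \<times> nat list) set" where
  "sync_rel M = {(u, v). conv u v \<in> nfa_lang M}"

text \<open>The alphabet is A = {0..<k}. The structure consists of k, an automaton for L,
  a synchronous automaton for L_=, and synchronous automata for L_a, a < k.\<close>
datatype pre_struct = PAS (alph: nat) (aut_L: "nat nfa") (aut_eq: "pletter nfa")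
                          (aut_mult: "pletter nfa list")

definition pre_automatic :: "pre_struct \<Rightarrow> bool" where
  "pre_automatic \<Gamma> \<longleftrightarrow>
     length (aut_mult \<Gamma>) = alph \<Gamma>
   \<and> nfa_lang (aut_L \<Gamma>) \<subseteq> lists {..<alph \<Gamma>}
   \<and> nfa_lang (aut_eq \<Gamma>) \<subseteq> (\<lambda>(u, v). conv u v) ` (nfa_lang (aut_L \<Gamma>) \<times> nfa_lang (aut_L \<Gamma>))
   \<and> (\<forall>a < alph \<Gamma>. nfa_lang (aut_mult \<Gamma> ! a)
         \<subseteq> (\<lambda>(u, v). conv u v) ` (nfa_lang (aut_L \<Gamma>) \<times> nfa_lang (aut_L \<Gamma>)))"

definition semigroup_on :: "'a set \<Rightarrow> ('a \<Rightarrow> 'a \<Rightarrow> 'a) \<Rightarrow> bool" where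
  "semigroup_on S mult \<longleftrightarrow>
     (\<forall>x\<in>S. \<forall>y\<in>S. mult x y \<in> S)
   \<and> (\<forall>x\<in>S. \<forall>y\<in>S. \<forall>z\<in>S. mult (mult x y) z = mult x (mult y z))"

definition right_cancellative :: "'a set \<Rightarrow> ('a \<Rightarrow> 'a \<Rightarrow> 'a) \<Rightarrow> bool" where
  "right_cancellative S mult \<longleftrightarrow> (\<forall>x\<in>S. \<forall>y\<in>S. \<forall>s\<in>S. mult x s = mult y s \<longrightarrow> x = y)"

definition is_interpretation :: "pre_struct \<Rightarrow> 'a set \<Rightarrow> ('a \<Rightarrow> 'a \<Rightarrow> 'a) \<Rightarrow> (nat list \<Rightarrow> 'a) \<Rightarrow> bool" where
  "is_interpretation \<Gamma> S mult \<sigma> \<longleftrightarrow>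
     (let A = {..<alph \<Gamma>}; L = nfa_lang (aut_L \<Gamma>) in
        (\<forall>w \<in> lists A. w \<noteq> [] \<longrightarrow> \<sigma> w \<in> S)
      \<and> (\<forall>u \<in> lists A. \<forall>v \<in> lists A. u \<noteq> [] \<longrightarrow> v \<noteq> [] \<longrightarrow> \<sigma> (u @ v) = mult (\<sigma> u) (\<sigma> v))
      \<and> [] \<notin> L
      \<and> \<sigma> ` L = S
      \<and> (\<forall>u\<in>L. \<forall>v\<in>L. (u, v) \<in> sync_rel (aut_eq \<Gamma>) \<longleftrightarrow> \<sigma> u = \<sigma> v)
      \<and> (\<forall>a\<in>A. \<forall>u\<in>L. \<forall>v\<in>L. (u, v) \<in> sync_rel (aut_mult \<Gamma> ! a) \<longleftrightarrow> \<sigma> (u @ [a]) = \<sigma> v))"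

definition automatic_structure_for :: "pre_struct \<Rightarrow> 'a set \<Rightarrow> ('a \<Rightarrow> 'a \<Rightarrow> 'a) \<Rightarrow> bool" where
  "automatic_structure_for \<Gamma> S mult \<longleftrightarrow> pre_automatic \<Gamma> \<and> (\<exists>\<sigma>. is_interpretation \<Gamma> S mult \<sigma>)"

definition enc_opt :: "nat option \<Rightarrow> nat" where
  "enc_opt x = (case x of None \<Rightarrow> 0 | Some n \<Rightarrow> Suc n)"

definition enc_nfa :: "('l \<Rightarrow> nat) \<Rightarrow> 'l nfa \<Rightarrow> nat" where
  "enc_nfa el M = (case M of (I, F, T) \<Rightarrow>
     list_encode [list_encode I, list_encode F,
                  list_encode (map (\<lambda>(p, a, q). list_encode [p, el a, q]) T)])"

definition enc_pletter :: "pletter \<Rightarrow> nat" where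
  "enc_pletter x = prod_encode (enc_opt (fst x), enc_opt (snd x))"

definition enc_struct :: "pre_struct \<Rightarrow> nat" where
  "enc_struct \<Gamma> = list_encode [alph \<Gamma>, enc_nfa id (aut_L \<Gamma>), enc_nfa enc_pletter (aut_eq \<Gamma>),
                                list_encode (map (enc_nfa enc_pletter) (aut_mult \<Gamma>))]"

end

(* Right-cancellable elements of a semigroup are closed under products, and every element of S is
   the image of a nonempty word over the generators. Hence S is right cancellative iff every
   generator a is right cancellable, i.e. iff there are no words u, v, w in L with (u, w) and
   (v, w) in L_a but (u, v) not in L_=. Whether a triple (u, v, w) is such a witness depends only
   on the state sets reached by six automaton runs reading the padded words in parallel. These
   state sets range over a set of size 2^(6(c+1)), where c is the code of the input, and cutting
   out the segment between two positions with equal state sets preserves them; so a witness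
   exists iff one of length at most 2^(6(c+1)) exists. Deciding right cancellativity thus
   amounts to a bounded search over codes of words, which is primitive recursive. *)

theory Submission
  imports Defs
begin

section \<open>Total computable functions on tuples\<close>

definition computable :: "nat \<Rightarrow> (nat list \<Rightarrow> nat) \<Rightarrow> bool" where
  "computable n g \<longleftrightarrow> (\<exists>f. \<forall>xs. length xs = n \<longrightarrow> eval f xs (g xs))"

lemma computable_nth: "i < n \<Longrightarrow> computable n (\<lambda>xs. xs ! i)"
  unfolding computable_def by (auto intro!: exI[of _ "Proj i"] eval_Proj)

lemma computable_zero: "computable n (\<lambda>_. 0)"
  unfolding computable_def by (auto intro!: exI[of _ Zero] eval_Zero)

lemma computable_comp:
  assumes g: "computable (length hs) g" and hs: "\<forall>h\<in>set hs. computable n h"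
  shows "computable n (\<lambda>xs. g (map (\<lambda>h. h xs) hs))"
proof -
  obtain f where f: "\<And>ys. length ys = length hs \<Longrightarrow> eval f ys (g ys)"
    using g unfolding computable_def by blast
  obtain F where F: "\<forall>h\<in>set hs. \<forall>xs. length xs = n \<longrightarrow> eval (F h) xs (h xs)"
    using bchoice[OF hs[unfolded computable_def]] by blast
  have "eval (Comp f (map F hs)) xs (g (map (\<lambda>h. h xs) hs))" if "length xs = n" for xs
  proof (rule eval_Comp)
    show "list_all2 (\<lambda>g y. eval g xs y) (map F hs) (map (\<lambda>h. h xs) hs)"
      using F that by (simp add: list_all2_map1 list_all2_map2 list_all2_same)
  qed (simp add: f)
  then show ?thesis unfolding computable_def by blast
qed

lemma computable_comp1:
  "computable 1 g \<Longrightarrow> computable n a \<Longrightarrow> computable n (\<lambda>xs. g [a xs])"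
  using computable_comp[where g = g and hs = "[a]"] by simp

lemma computable_comp2:
  "computable 2 g \<Longrightarrow> computable n a \<Longrightarrow> computable n b \<Longrightarrow> computable n (\<lambda>xs. g [a xs, b xs])"
  using computable_comp[where g = g and hs = "[a, b]"] by (simp add: numeral_2_eq_2)

lemma computable_Suc: "computable n g \<Longrightarrow> computable n (\<lambda>xs. Suc (g xs))"
proof -
  have "computable 1 (\<lambda>ys. Suc (ys ! 0))"
    unfolding computable_def by (auto intro!: exI[of _ Succ] eval_Succ simp: length_Suc_conv)
  then show "computable n g \<Longrightarrow> computable n (\<lambda>xs. Suc (g xs))"
    using computable_comp1 by fastforce
qed

lemma computable_rec_nat:
  assumes b: "computable n b" and s: "computable (Suc (Suc n)) s"
    and g: "\<And>x ys. length ys = n \<Longrightarrow> g (x # ys) = rec_nat (b ys) (\<lambda>i r. s (i # r # ys)) x"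
  shows "computable (Suc n) g"
proof -
  obtain fb where fb: "\<And>ys. length ys = n \<Longrightarrow> eval fb ys (b ys)"
    using b unfolding computable_def by blast
  obtain fs where fs: "\<And>ys. length ys = Suc (Suc n) \<Longrightarrow> eval fs ys (s ys)"
    using s unfolding computable_def by blast
  have "eval (Prim fb fs) (x # ys) (rec_nat (b ys) (\<lambda>i r. s (i # r # ys)) x)"
    if "length ys = n" for x ys
  proof (induction x)
    case 0
    show ?case by (rule eval_Prim0) (simp add: fb that)
  next
    case (Suc x)
    then show ?case by (rule eval_PrimS) (simp add: fs that)
  qed
  then show ?thesis
    unfolding computable_def by (metis g length_Suc_conv)
qed

lemma computable_add: "computable 2 (\<lambda>xs. xs ! 0 + xs ! 1)"
  unfolding numeral_2_eq_2
proof (rule computable_rec_nat[where b = "\<lambda>ys. ys ! 0" and s = "\<lambda>ys. Suc (ys ! 1)"])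
  show "(x # ys) ! 0 + (x # ys) ! 1 = rec_nat (ys ! 0) (\<lambda>i r. Suc ((i # r # ys) ! 1)) x" for x ys
    by (induction x) simp_all
qed (simp_all add: computable_nth computable_Suc)

lemma computable_plus: "computable n a \<Longrightarrow> computable n b \<Longrightarrow> computable n (\<lambda>xs. a xs + b xs)"
  using computable_comp2[OF computable_add] by simp

lemma computable_pred: "computable n a \<Longrightarrow> computable n (\<lambda>xs. a xs - 1)"
proof -
  have "computable 1 (\<lambda>xs. xs ! 0 - 1)"
    unfolding One_nat_def
  proof (rule computable_rec_nat[where b = "\<lambda>_. 0" and s = "\<lambda>ys. ys ! 0"])
    show "(x # ys) ! 0 - Suc 0 = rec_nat 0 (\<lambda>i r. (i # r # ys) ! 0) x" for x ys
      by (cases x) simp_all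
  qed (simp_all add: computable_nth computable_zero)
  from computable_comp1[OF this] show "computable n a \<Longrightarrow> ?thesis" by simp
qed

lemma computable_minus: "computable n a \<Longrightarrow> computable n b \<Longrightarrow> computable n (\<lambda>xs. a xs - b xs)"
proof -
  have "computable 2 (\<lambda>xs. xs ! 1 - xs ! 0)"
    unfolding numeral_2_eq_2
  proof (rule computable_rec_nat[where b = "\<lambda>ys. ys ! 0" and s = "\<lambda>ys. ys ! 1 - 1"])
    show "(x # ys) ! 1 - (x # ys) ! 0 = rec_nat (ys ! 0) (\<lambda>i r. (i # r # ys) ! 1 - 1) x" for x ys
      by (induction x) simp_all
  qed (intro computable_pred computable_nth; simp)+
  from computable_comp2[OF this] show "computable n a \<Longrightarrow> computable n b \<Longrightarrow> ?thesis"
    by fastforce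
qed

lemma computable_triangle: "computable n a \<Longrightarrow> computable n (\<lambda>xs. triangle (a xs))"
proof -
  have "computable 1 (\<lambda>xs. triangle (xs ! 0))"
    unfolding One_nat_def
  proof (rule computable_rec_nat[where b = "\<lambda>_. 0" and s = "\<lambda>ys. ys ! 1 + Suc (ys ! 0)"])
    show "triangle ((x # ys) ! 0) = rec_nat 0 (\<lambda>i r. (i # r # ys) ! 1 + Suc ((i # r # ys) ! 0)) x"
      for x ys by (induction x) simp_all
  qed (simp_all add: computable_nth computable_zero computable_plus computable_Suc)
  from computable_comp1[OF this] show "computable n a \<Longrightarrow> ?thesis" by simp
qed

lemma computable_prod_encode:
  "computable n a \<Longrightarrow> computable n b \<Longrightarrow> computable n (\<lambda>xs. prod_encode (a xs, b xs))"
  unfolding prod_encode_def by (simp add: computable_plus computable_triangle)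

lemma of_bool_le_eq_minus: "of_bool (a \<le> b) = 1 - (a - b)" for a b :: nat
  by simp

(* The diagonal a + b of n = prod_encode (a, b), obtained without decoding n; it is what makes
   prod_decode computable. *)
definition prod_diagonal :: "nat \<Rightarrow> nat" where
  "prod_diagonal n = rec_nat 0 (\<lambda>t r. r + of_bool (triangle (Suc t) \<le> n)) n"

lemma computable_prod_diagonal: "computable 1 (\<lambda>xs. prod_diagonal (xs ! 0))"
proof -
  have "computable 2 (\<lambda>xs. rec_nat 0 (\<lambda>t r. r + of_bool (triangle (Suc t) \<le> xs ! 1)) (xs ! 0))"
    unfolding numeral_2_eq_2 of_bool_le_eq_minus
    by (rule computable_rec_nat[where b = "\<lambda>_. 0"
          and s = "\<lambda>ys. ys ! 1 + (1 - (triangle (Suc (ys ! 0)) - ys ! 2))"])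
      ((intro computable_zero computable_nth computable_plus computable_minus
        computable_triangle computable_Suc; simp) | auto simp: length_Suc_conv)+
  from computable_comp2[OF this computable_nth computable_nth] show ?thesis
    by (simp add: prod_diagonal_def)
qed

lemma triangle_mono: "a \<le> b \<Longrightarrow> triangle a \<le> triangle b"
  unfolding triangle_def by (intro div_le_mono mult_le_mono) simp_all

lemma triangle_ge: "n \<le> triangle n"
  by (induction n) auto

lemma prod_diagonal_prod_encode: "prod_diagonal (prod_encode (a, b)) = a + b"
proof -
  let ?n = "prod_encode (a, b)"
  have step: "of_bool (triangle (Suc t) \<le> ?n) = of_bool (t < a + b)" for t :: nat
  proof (cases "t < a + b")
    case True
    then have "triangle (Suc t) \<le> triangle (a + b)" by (intro triangle_mono) simp
    then show ?thesis using True by (simp add: prod_encode_def)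
  next
    case False
    then have "triangle (Suc (a + b)) \<le> triangle (Suc t)" by (intro triangle_mono) simp
    then show ?thesis using False by (simp add: prod_encode_def)
  qed
  have count: "rec_nat 0 (\<lambda>t r. r + of_bool (t < k)) m = min m k" for k m :: nat
    by (induction m) auto
  have "a + b \<le> ?n"
    using triangle_ge[of "a + b"] by (simp add: prod_encode_def)
  then show ?thesis
    unfolding prod_diagonal_def step count by simp
qed

definition computable1 :: "(nat \<Rightarrow> nat) \<Rightarrow> bool" where
  "computable1 f \<longleftrightarrow> computable 1 (\<lambda>xs. f (xs ! 0))"

definition decidable :: "(nat \<Rightarrow> bool) \<Rightarrow> bool" where
  "decidable P \<longleftrightarrow> computable1 (\<lambda>x. of_bool (P x))"

abbreviation pfst :: "nat \<Rightarrow> nat" where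
  "pfst n \<equiv> fst (prod_decode n)"

abbreviation psnd :: "nat \<Rightarrow> nat" where
  "psnd n \<equiv> snd (prod_decode n)"

named_theorems computable_intros

lemma computable1_id [computable_intros]: "computable1 (\<lambda>x. x)"
  unfolding computable1_def by (rule computable_nth) simp

lemma computable1_const [computable_intros]: "computable1 (\<lambda>x. c)"
  unfolding computable1_def by (induction c) (simp_all add: computable_zero computable_Suc)

lemma computable1_Suc [computable_intros]: "computable1 a \<Longrightarrow> computable1 (\<lambda>x. Suc (a x))"
  unfolding computable1_def by (rule computable_Suc)

lemma computable1_plus [computable_intros]:
  "computable1 a \<Longrightarrow> computable1 b \<Longrightarrow> computable1 (\<lambda>x. a x + b x)"
  unfolding computable1_def by (rule computable_plus)

lemma computable1_minus [computable_intros]: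
  "computable1 a \<Longrightarrow> computable1 b \<Longrightarrow> computable1 (\<lambda>x. a x - b x)"
  unfolding computable1_def by (rule computable_minus)

lemma computable1_prod_encode [computable_intros]:
  "computable1 a \<Longrightarrow> computable1 b \<Longrightarrow> computable1 (\<lambda>x. prod_encode (a x, b x))"
  unfolding computable1_def by (rule computable_prod_encode)

lemma computable1_comp: "computable1 g \<Longrightarrow> computable1 h \<Longrightarrow> computable1 (\<lambda>x. g (h x))"
  unfolding computable1_def using computable_comp1[of "\<lambda>xs. g (xs ! 0)"] by simp

lemma computable1_comp2:
  "computable1 (\<lambda>q. F (pfst q) (psnd q)) \<Longrightarrow> computable1 a \<Longrightarrow> computable1 b
    \<Longrightarrow> computable1 (\<lambda>x. F (a x) (b x))"
  using computable1_comp[of "\<lambda>q. F (pfst q) (psnd q)" "\<lambda>x. prod_encode (a x, b x)"]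
  by (simp add: computable1_prod_encode)

lemma computable1_comp3:
  "computable1 (\<lambda>q. F (pfst q) (pfst (psnd q)) (psnd (psnd q))) \<Longrightarrow> computable1 a \<Longrightarrow> computable1 b
    \<Longrightarrow> computable1 c \<Longrightarrow> computable1 (\<lambda>x. F (a x) (b x) (c x))"
  using computable1_comp[of "\<lambda>q. F (pfst q) (pfst (psnd q)) (psnd (psnd q))"
      "\<lambda>x. prod_encode (a x, prod_encode (b x, c x))"]
  by (simp add: computable1_prod_encode)

lemma decidable_comp2:
  "decidable (\<lambda>q. P (pfst q) (psnd q)) \<Longrightarrow> computable1 a \<Longrightarrow> computable1 b
    \<Longrightarrow> decidable (\<lambda>x. P (a x) (b x))"
  unfolding decidable_def by (rule computable1_comp2[where F = "\<lambda>y z. of_bool (P y z)"])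

lemma decidable_comp3:
  "decidable (\<lambda>q. P (pfst q) (pfst (psnd q)) (psnd (psnd q))) \<Longrightarrow> computable1 a \<Longrightarrow> computable1 b
    \<Longrightarrow> computable1 c \<Longrightarrow> decidable (\<lambda>x. P (a x) (b x) (c x))"
  unfolding decidable_def by (rule computable1_comp3[where F = "\<lambda>y z v. of_bool (P y z v)"])

lemma decidable_comp: "decidable P \<Longrightarrow> computable1 h \<Longrightarrow> decidable (\<lambda>x. P (h x))"
  unfolding decidable_def by (rule computable1_comp)

lemma pfst_eq: "pfst n = n - triangle (prod_diagonal n)"
  and psnd_eq: "psnd n = prod_diagonal n - pfst n"
proof -
  obtain a b where ab: "prod_decode n = (a, b)" by fastforce
  then have "n = prod_encode (a, b)" by (metis prod_decode_inverse)
  then have "prod_diagonal n = a + b" "n = triangle (a + b) + a"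
    using prod_diagonal_prod_encode by (simp_all add: prod_encode_def)
  then show "pfst n = n - triangle (prod_diagonal n)" "psnd n = prod_diagonal n - pfst n"
    using ab by simp_all
qed

lemma computable1_pfst [computable_intros]: "computable1 a \<Longrightarrow> computable1 (\<lambda>x. pfst (a x))"
proof -
  have "computable1 pfst"
    unfolding computable1_def pfst_eq
    by (intro computable_minus computable_triangle computable_prod_diagonal computable_nth) simp
  then show "computable1 a \<Longrightarrow> ?thesis" by (rule computable1_comp)
qed

lemma computable1_psnd [computable_intros]: "computable1 a \<Longrightarrow> computable1 (\<lambda>x. psnd (a x))"
proof -
  have "computable1 prod_diagonal"
    using computable_prod_diagonal by (simp add: computable1_def)
  then have "computable1 psnd"
    unfolding psnd_eq by (intro computable1_minus computable1_pfst computable1_id)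
  then show "computable1 a \<Longrightarrow> ?thesis" by (rule computable1_comp)
qed

lemma computable1_rec_nat [computable_intros]:
  assumes m: "computable1 m" and a: "computable1 a"
    and s: "computable1 (\<lambda>q. s (pfst q) (pfst (psnd q)) (psnd (psnd q)))"
  shows "computable1 (\<lambda>x. rec_nat (a x) (s x) (m x))"
proof -
  have s3: "computable 3 (\<lambda>zs. s (zs ! 2) (zs ! 0) (zs ! 1))"
    using computable_comp1[OF s[unfolded computable1_def],
        of 3 "\<lambda>zs. prod_encode (zs ! 2, prod_encode (zs ! 0, zs ! 1))"]
    by (simp add: computable_prod_encode computable_nth)
  have "computable 2 (\<lambda>xs. rec_nat (a (xs ! 1)) (s (xs ! 1)) (xs ! 0))"
    unfolding numeral_2_eq_2
    by (rule computable_rec_nat[where b = "\<lambda>ys. a (ys ! 0)" and s = "\<lambda>zs. s (zs ! 2) (zs ! 0) (zs ! 1)"])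
      (use a s3 in \<open>auto simp: computable1_def numeral_3_eq_3 length_Suc_conv\<close>)
  from computable_comp2[OF this, of 1 "\<lambda>xs. m (xs ! 0)" "\<lambda>xs. xs ! 0"] show ?thesis
    using m unfolding computable1_def by (simp add: computable_nth)
qed

lemma computable1_power2 [computable_intros]: "computable1 a \<Longrightarrow> computable1 (\<lambda>x. 2 ^ a x)"
proof -
  have "(2::nat) ^ n = rec_nat 1 (\<lambda>_ r. r + r) n" for n
    by (induction n) simp_all
  moreover assume "computable1 a"
  then have "computable1 (\<lambda>x. rec_nat 1 (\<lambda>_ r. r + r) (a x))"
    by (intro computable_intros)
  ultimately show ?thesis by simp
qed

lemma computable1_mult [computable_intros]:
  assumes a: "computable1 a" and b: "computable1 b"
  shows "computable1 (\<lambda>x. a x * b x)"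
proof -
  have "m * n = rec_nat 0 (\<lambda>_ r. r + n) m" for m n :: nat
    by (induction m) simp_all
  moreover have "computable1 (\<lambda>q. b (pfst q))"
    by (rule computable1_comp[OF b]) (intro computable_intros)
  then have "computable1 (\<lambda>x. rec_nat 0 (\<lambda>_ r. r + b x) (a x))"
    by (intro computable_intros a)
  ultimately show ?thesis by simp
qed

lemma computable1_of_bool [computable_intros]: "decidable P \<Longrightarrow> computable1 (\<lambda>x. of_bool (P x))"
  by (simp add: decidable_def)

lemma computable1_If [computable_intros]:
  assumes "decidable P" "computable1 a" "computable1 b"
  shows "computable1 (\<lambda>x. if P x then a x else b x)"
proof -
  have "computable1 (\<lambda>q. a (pfst q))"
    by (rule computable1_comp[OF assms(2)]) (intro computable_intros)
  then have "computable1 (\<lambda>x. rec_nat (b x) (\<lambda>_ _. a x) (of_bool (P x)))"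
    by (intro computable_intros assms)
  then show ?thesis
    by (rule back_subst[where P = computable1]) (auto simp: fun_eq_iff One_nat_def)
qed

lemma decidable_le [computable_intros]:
  assumes "computable1 a" "computable1 b" shows "decidable (\<lambda>x. a x \<le> b x)"
  unfolding decidable_def of_bool_le_eq_minus by (intro computable_intros assms)

lemma computable1_max [computable_intros]:
  assumes "computable1 a" "computable1 b" shows "computable1 (\<lambda>x. max (a x) (b x))"
  unfolding max_def by (intro computable_intros assms)

lemma decidable_less [computable_intros]:
  assumes "computable1 a" "computable1 b" shows "decidable (\<lambda>x. a x < b x)"
  unfolding Suc_le_eq[symmetric] by (intro computable_intros assms)

lemma decidable_not [computable_intros]:
  assumes "decidable P" shows "decidable (\<lambda>x. \<not> P x)"
proof -
  have "computable1 (\<lambda>x. 1 - of_bool (P x))" by (intro computable_intros assms)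
  then show ?thesis
    unfolding decidable_def by (rule back_subst[where P = computable1]) auto
qed

lemma decidable_conj [computable_intros]:
  assumes "decidable P" "decidable Q" shows "decidable (\<lambda>x. P x \<and> Q x)"
proof -
  have "computable1 (\<lambda>x. if P x then of_bool (Q x) else 0)" by (intro computable_intros assms)
  then show ?thesis
    unfolding decidable_def by (rule back_subst[where P = computable1]) auto
qed

lemma decidable_eq [computable_intros]:
  assumes "computable1 a" "computable1 b" shows "decidable (\<lambda>x. a x = b x)"
  unfolding order_eq_iff by (intro computable_intros assms)

lemma decidable_bex [computable_intros]:
  assumes P: "decidable (\<lambda>q. P (pfst q) (psnd q))" and m: "computable1 m"
  shows "decidable (\<lambda>x. \<exists>i<m x. P x i)"
proof -
  have search: "rec_nat 0 (\<lambda>i r. if P x i then 1 else r) n = of_bool (\<exists>i<n. P x i)" for x n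
    by (induction n) (auto simp: less_Suc_eq)
  have "decidable (\<lambda>q. P (pfst q) (pfst (psnd q)))"
    using decidable_comp[OF P, of "\<lambda>q. prod_encode (pfst q, pfst (psnd q))"]
    by (simp add: computable_intros)
  then have "computable1 (\<lambda>x. rec_nat 0 (\<lambda>i r. if P x i then 1 else r) (m x))"
    by (intro computable_intros m)
  moreover have "(\<lambda>x. rec_nat 0 (\<lambda>i r. if P x i then 1 else r) (m x)) = (\<lambda>x. of_bool (\<exists>i<m x. P x i))"
    by (simp only: search)
  ultimately show ?thesis
    unfolding decidable_def by (rule back_subst[where P = computable1])
qed

(* list_encode codes [] as 0 and x # xs as Suc (prod_encode (x, list_encode xs)). *)
definition code_hd :: "nat \<Rightarrow> nat" where
  "code_hd l = pfst (l - 1)"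

definition code_tl :: "nat \<Rightarrow> nat" where
  "code_tl l = psnd (l - 1)"

definition code_Cons :: "nat \<Rightarrow> nat \<Rightarrow> nat" where
  "code_Cons x l = Suc (prod_encode (x, l))"

definition code_drop :: "nat \<Rightarrow> nat \<Rightarrow> nat" where
  "code_drop i l = rec_nat l (\<lambda>_. code_tl) i"

definition code_nth :: "nat \<Rightarrow> nat \<Rightarrow> nat" where
  "code_nth l i = code_hd (code_drop i l)"

(* No list is longer than its code, so counting the nonempty suffixes below l gives the length. *)
definition code_length :: "nat \<Rightarrow> nat" where
  "code_length l = rec_nat 0 (\<lambda>i n. n + of_bool (code_drop i l \<noteq> 0)) l"

definition code_member :: "nat \<Rightarrow> nat \<Rightarrow> bool" where
  "code_member x l \<longleftrightarrow> (\<exists>i<code_length l. code_nth l i = x)"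

lemma code_Cons_list_encode: "code_Cons x (list_encode xs) = list_encode (x # xs)"
  by (simp add: code_Cons_def)

lemma code_tl_list_encode: "code_tl (list_encode xs) = list_encode (tl xs)"
proof (cases xs)
  case Nil
  have "prod_decode 0 = (0, 0)"
    using prod_encode_inverse[of "(0, 0)"] by (simp add: prod_encode_def)
  with Nil show ?thesis by (simp add: code_tl_def)
qed (simp add: code_tl_def)

lemma code_drop_list_encode: "code_drop i (list_encode xs) = list_encode (drop i xs)"
  by (induction i) (simp_all add: code_drop_def code_tl_list_encode drop_Suc tl_drop)

lemma code_nth_list_encode: "i < length xs \<Longrightarrow> code_nth (list_encode xs) i = xs ! i"
  by (simp add: code_nth_def code_hd_def code_drop_list_encode Cons_nth_drop_Suc[symmetric])

lemma length_le_list_encode: "length xs \<le> list_encode xs"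
proof (induction xs)
  case (Cons x xs)
  then show ?case using le_prod_encode_2[of "list_encode xs" x] by simp
qed simp

lemma elem_le_list_encode: "x \<in> set xs \<Longrightarrow> x \<le> list_encode xs"
proof (induction xs)
  case (Cons y xs)
  then show ?case
    using le_prod_encode_1[of y "list_encode xs"] le_prod_encode_2[of "list_encode xs" y] by auto
qed simp

lemma code_length_list_encode: "code_length (list_encode xs) = length xs"
proof -
  have empty: "list_encode ys = 0 \<longleftrightarrow> ys = []" for ys
    by (cases ys) simp_all
  have nonempty: "code_drop i (list_encode xs) \<noteq> 0 \<longleftrightarrow> i < length xs" for i
    by (simp add: empty code_drop_list_encode not_le)
  have "rec_nat 0 (\<lambda>i n. n + of_bool (i < length xs)) m = min m (length xs)" for m
    by (induction m) auto
  then show ?thesis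
    unfolding code_length_def nonempty using length_le_list_encode[of xs] by simp
qed

lemma code_member_iff: "code_member x l \<longleftrightarrow> x \<in> set (list_decode l)"
proof -
  have "code_member x (list_encode xs) \<longleftrightarrow> x \<in> set xs" for xs
    by (auto simp: code_member_def code_length_list_encode code_nth_list_encode in_set_conv_nth)
  from this[of "list_decode l"] show ?thesis by simp
qed

lemma computable1_code_hd [computable_intros]: "computable1 a \<Longrightarrow> computable1 (\<lambda>x. code_hd (a x))"
  unfolding code_hd_def by (intro computable_intros)

lemma computable1_code_tl [computable_intros]: "computable1 a \<Longrightarrow> computable1 (\<lambda>x. code_tl (a x))"
  unfolding code_tl_def by (intro computable_intros)

lemma computable1_code_Cons [computable_intros]:
  "computable1 a \<Longrightarrow> computable1 b \<Longrightarrow> computable1 (\<lambda>x. code_Cons (a x) (b x))"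
  unfolding code_Cons_def by (intro computable_intros)

lemma computable1_code_drop [computable_intros]:
  "computable1 a \<Longrightarrow> computable1 b \<Longrightarrow> computable1 (\<lambda>x. code_drop (a x) (b x))"
  by (rule computable1_comp2[where F = code_drop]) (unfold code_drop_def, intro computable_intros)

lemma computable1_code_nth [computable_intros]:
  "computable1 a \<Longrightarrow> computable1 b \<Longrightarrow> computable1 (\<lambda>x. code_nth (a x) (b x))"
  unfolding code_nth_def by (intro computable_intros)

lemma computable1_code_length [computable_intros]: "computable1 a \<Longrightarrow> computable1 (\<lambda>x. code_length (a x))"
  by (rule computable1_comp[where g = code_length]) (unfold code_length_def, intro computable_intros)

lemma decidable_code_member [computable_intros]:
  "computable1 a \<Longrightarrow> computable1 b \<Longrightarrow> decidable (\<lambda>x. code_member (a x) (b x))"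
  by (rule decidable_comp2[where P = code_member]) (unfold code_member_def, intro computable_intros)

lemma prod_encode_mono: "a \<le> a' \<Longrightarrow> b \<le> b' \<Longrightarrow> prod_encode (a, b) \<le> prod_encode (a', b')"
  unfolding prod_encode_def using triangle_mono[of "a + b" "a' + b'"] by simp

lemma list_encode_le_replicate:
  "\<forall>x\<in>set u. x \<le> k \<Longrightarrow> length u \<le> n \<Longrightarrow> list_encode u \<le> list_encode (replicate n k)"
proof (induction u arbitrary: n)
  case (Cons x u)
  then obtain m where "n = Suc m" "length u \<le> m"
    by (cases n) auto
  with Cons show ?case
    by (simp add: prod_encode_mono)
qed simp

lemma computable1_list_encode_replicate [computable_intros]:
  assumes n: "computable1 n" and k: "computable1 k"
  shows "computable1 (\<lambda>x. list_encode (replicate (n x) (k x)))"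
proof -
  have "list_encode (replicate m y) = rec_nat 0 (\<lambda>_ r. code_Cons y r) m" for m y
    by (induction m) (simp_all add: code_Cons_def)
  moreover have "computable1 (\<lambda>q. k (pfst q))"
    by (rule computable1_comp[OF k]) (intro computable_intros)
  then have "computable1 (\<lambda>x. rec_nat 0 (\<lambda>_ r. code_Cons (k x) r) (n x))"
    by (intro computable_intros n)
  ultimately show ?thesis by simp
qed

section \<open>Running automata on codes\<close>

definition enc_trans :: "('l \<Rightarrow> nat) \<Rightarrow> (nat \<times> 'l \<times> nat) list \<Rightarrow> nat" where
  "enc_trans e T = list_encode (map (\<lambda>(p, a, q). list_encode [p, e a, q]) T)"

lemma enc_nfa_eq: "enc_nfa e (I, F, T) = list_encode [list_encode I, list_encode F, enc_trans e T]"
  by (simp add: enc_nfa_def enc_trans_def del: list_encode.simps)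

lemma code_nth_enc_nfa:
  "code_nth (enc_nfa e (I, F, T)) 0 = list_encode I"
  "code_nth (enc_nfa e (I, F, T)) 1 = list_encode F"
  "code_nth (enc_nfa e (I, F, T)) 2 = enc_trans e T"
  by (simp_all add: enc_nfa_eq code_nth_list_encode del: list_encode.simps)

lemma code_nth_enc_trans:
  assumes "j < length T" "T ! j = (p, a, q)"
  shows "code_nth (code_nth (enc_trans e T) j) 0 = p"
    and "code_nth (code_nth (enc_trans e T) j) 1 = e a"
    and "code_nth (code_nth (enc_trans e T) j) 2 = q"
  using assms by (simp_all add: enc_trans_def code_nth_list_encode del: list_encode.simps)

lemma code_length_enc_trans: "code_length (enc_trans e T) = length T"
  by (simp add: enc_trans_def code_length_list_encode del: list_encode.simps)

lemma set_list_decode_rec_nat_code_Cons: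
  "set (list_decode (rec_nat 0 (\<lambda>j l. if P j then code_Cons (h j) l else l) m)) = h ` {j. j < m \<and> P j}"
proof (induction m)
  case (Suc m)
  have "list_decode (code_Cons x l) = x # list_decode l" for x l
    using code_Cons_list_encode[of x "list_decode l"] by (metis list_decode_inverse list_encode_inverse)
  with Suc show ?case by (auto simp: less_Suc_eq)
qed simp

definition code_step :: "nat \<Rightarrow> nat \<Rightarrow> nat \<Rightarrow> nat" where
  "code_step T a Q = rec_nat 0 (\<lambda>j R. if code_nth (code_nth T j) 1 = a \<and> code_member (code_nth (code_nth T j) 0) Q
      then code_Cons (code_nth (code_nth T j) 2) R else R) (code_length T)"

lemma code_step_enc_trans:
  assumes "inj e"
  shows "set (list_decode (code_step (enc_trans e T) (e a) Q))
    = {q'. \<exists>q\<in>set (list_decode Q). (q, a, q') \<in> set T}"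
proof -
  have "(\<lambda>j. code_nth (code_nth (enc_trans e T) j) 2) `
      {j. j < length T \<and> code_nth (code_nth (enc_trans e T) j) 1 = e a
          \<and> code_member (code_nth (code_nth (enc_trans e T) j) 0) Q}
    = {q'. \<exists>q\<in>set (list_decode Q). (q, a, q') \<in> set T}" (is "?lhs = ?rhs")
  proof
    show "?lhs \<subseteq> ?rhs"
    proof
      fix q' assume "q' \<in> ?lhs"
      then obtain j where j: "j < length T"
        and label: "code_nth (code_nth (enc_trans e T) j) 1 = e a"
        and source: "code_member (code_nth (code_nth (enc_trans e T) j) 0) Q"
        and target: "q' = code_nth (code_nth (enc_trans e T) j) 2"
        by blast
      obtain p b q where t: "T ! j = (p, b, q)" by (cases "T ! j")
      have "b = a" "p \<in> set (list_decode Q)" "q' = q"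
        using label source target code_nth_enc_trans[OF j t] injD[OF assms]
        by (simp_all add: code_member_iff del: One_nat_def)
      then show "q' \<in> ?rhs" using nth_mem[OF j] t by auto
    qed
    show "?rhs \<subseteq> ?lhs"
    proof
      fix q' assume "q' \<in> ?rhs"
      then obtain q j where "q \<in> set (list_decode Q)" "j < length T" "T ! j = (q, a, q')"
        by (auto simp: in_set_conv_nth)
      then show "q' \<in> ?lhs"
        by (auto simp: code_nth_enc_trans code_member_iff simp del: One_nat_def intro!: image_eqI[of _ _ j])
    qed
  qed
  then show ?thesis
    unfolding code_step_def code_length_enc_trans set_list_decode_rec_nat_code_Cons .
qed

lemma computable1_code_step [computable_intros]:
  "computable1 a \<Longrightarrow> computable1 b \<Longrightarrow> computable1 c \<Longrightarrow> computable1 (\<lambda>x. code_step (a x) (b x) (c x))"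
  by (rule computable1_comp3[where F = code_step]) (unfold code_step_def, intro computable_intros)

definition code_run :: "nat \<Rightarrow> (nat \<Rightarrow> nat) \<Rightarrow> nat \<Rightarrow> nat" where
  "code_run M G n = rec_nat (code_nth M 0) (\<lambda>p Q. code_step (code_nth M 2) (G p) Q) n"

definition code_accepts :: "nat \<Rightarrow> (nat \<Rightarrow> nat) \<Rightarrow> nat \<Rightarrow> bool" where
  "code_accepts M G n \<longleftrightarrow> (\<exists>i<code_length (code_nth M 1). code_member (code_nth (code_nth M 1) i) (code_run M G n))"

lemma nfa_reach_append: "nfa_reach T Q (xs @ ys) = nfa_reach T (nfa_reach T Q xs) ys"
  by (induction xs arbitrary: Q) simp_all

lemma code_run_enc_nfa:
  assumes "inj e" and G: "\<And>p. p < length w \<Longrightarrow> G p = e (w ! p)"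
  shows "m \<le> length w \<Longrightarrow> set (list_decode (code_run (enc_nfa e (I, F, T)) G m)) = nfa_reach T (set I) (take m w)"
proof (induction m)
  case (Suc m)
  then have "take (Suc m) w = take m w @ [w ! m]" by (simp add: take_Suc_conv_app_nth)
  with Suc show ?case
    by (simp add: code_run_def code_nth_enc_nfa G code_step_enc_trans[OF assms(1)] nfa_reach_append)
qed (simp add: code_run_def code_nth_enc_nfa)

lemma code_accepts_enc_nfa:
  assumes "inj e" and "\<And>p. p < length w \<Longrightarrow> G p = e (w ! p)"
  shows "code_accepts (enc_nfa e M) G (length w) \<longleftrightarrow> nfa_accepts M w"
proof -
  obtain I F T where M: "M = (I, F, T)" by (cases M)
  have "code_accepts (enc_nfa e M) G (length w)
      \<longleftrightarrow> (\<exists>i<length F. code_nth (list_encode F) i \<in> nfa_reach T (set I) w)"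
    using code_run_enc_nfa[OF assms order_refl, of I F T]
    by (simp add: M code_accepts_def code_nth_enc_nfa code_length_list_encode code_member_iff
        del: One_nat_def)
  also have "\<dots> \<longleftrightarrow> (\<exists>i<length F. F ! i \<in> nfa_reach T (set I) w)"
    by (auto simp: code_nth_list_encode)
  also have "\<dots> \<longleftrightarrow> nfa_accepts M w"
    by (auto simp: M nfa_accepts_def set_conv_nth)
  finally show ?thesis .
qed

definition nth_opt :: "'a list \<Rightarrow> nat \<Rightarrow> 'a option" where
  "nth_opt xs p = (if p < length xs then Some (xs ! p) else None)"

lemma conv_eq_map_nth_opt: "conv u v = map (\<lambda>p. (nth_opt u p, nth_opt v p)) [0..<max (length u) (length v)]"
  by (rule nth_equalityI) (auto simp: conv_def nth_opt_def nth_append)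

definition code_accepts_word :: "nat \<Rightarrow> nat \<Rightarrow> bool" where
  "code_accepts_word M u \<longleftrightarrow> code_accepts M (code_nth u) (code_length u)"

definition code_nth_opt :: "nat \<Rightarrow> nat \<Rightarrow> nat" where
  "code_nth_opt u p = (if p < code_length u then Suc (code_nth u p) else 0)"

definition code_accepts_pair :: "nat \<Rightarrow> nat \<Rightarrow> nat \<Rightarrow> bool" where
  "code_accepts_pair M u w \<longleftrightarrow>
     code_accepts M (\<lambda>p. prod_encode (code_nth_opt u p, code_nth_opt w p)) (max (code_length u) (code_length w))"

lemma code_accepts_word_iff: "code_accepts_word (enc_nfa id M) (list_encode u) \<longleftrightarrow> nfa_accepts M u"
  unfolding code_accepts_word_def code_length_list_encode
  by (rule code_accepts_enc_nfa) (simp_all add: code_nth_list_encode)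

lemma code_nth_opt_list_encode: "code_nth_opt (list_encode u) p = enc_opt (nth_opt u p)"
  by (simp add: code_nth_opt_def nth_opt_def enc_opt_def code_length_list_encode code_nth_list_encode)

lemma inj_enc_pletter: "inj enc_pletter"
proof -
  have "inj enc_opt" by (rule injI) (simp add: enc_opt_def split: option.splits)
  then show ?thesis by (rule_tac injI) (auto simp: enc_pletter_def prod_eq_iff dest: injD)
qed

lemma code_accepts_pair_iff:
  "code_accepts_pair (enc_nfa enc_pletter M) (list_encode u) (list_encode w) \<longleftrightarrow> (u, w) \<in> sync_rel M"
proof -
  have len: "length (conv u w) = max (length u) (length w)"
    by (simp add: conv_def)
  have "code_accepts_pair (enc_nfa enc_pletter M) (list_encode u) (list_encode w) \<longleftrightarrow> nfa_accepts M (conv u w)"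
    unfolding code_accepts_pair_def code_length_list_encode code_nth_opt_list_encode len[symmetric]
    by (rule code_accepts_enc_nfa[OF inj_enc_pletter]) (simp add: conv_eq_map_nth_opt enc_pletter_def)
  then show ?thesis by (simp add: sync_rel_def nfa_lang_def)
qed

lemma decidable_code_accepts_word [computable_intros]:
  "computable1 a \<Longrightarrow> computable1 b \<Longrightarrow> decidable (\<lambda>x. code_accepts_word (a x) (b x))"
  by (rule decidable_comp2[where P = code_accepts_word])
    (unfold code_accepts_word_def code_accepts_def code_run_def, intro computable_intros)

lemma decidable_code_accepts_pair [computable_intros]:
  "computable1 a \<Longrightarrow> computable1 b \<Longrightarrow> computable1 c \<Longrightarrow> decidable (\<lambda>x. code_accepts_pair (a x) (b x) (c x))"
  by (rule decidable_comp3[where P = code_accepts_pair])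
    (unfold code_accepts_pair_def code_nth_opt_def code_accepts_def code_run_def, intro computable_intros)

lemma code_nth_enc_struct:
  "code_nth (enc_struct \<Gamma>) 0 = alph \<Gamma>"
  "code_nth (enc_struct \<Gamma>) 1 = enc_nfa id (aut_L \<Gamma>)"
  "code_nth (enc_struct \<Gamma>) 2 = enc_nfa enc_pletter (aut_eq \<Gamma>)"
  "a < length (aut_mult \<Gamma>) \<Longrightarrow> code_nth (code_nth (enc_struct \<Gamma>) 3) a = enc_nfa enc_pletter (aut_mult \<Gamma> ! a)"
  by (simp_all add: enc_struct_def code_nth_list_encode del: list_encode.simps One_nat_def)

lemma enc_nfa_le_enc_struct:
  "enc_nfa id (aut_L \<Gamma>) \<le> enc_struct \<Gamma>"
  "enc_nfa enc_pletter (aut_eq \<Gamma>) \<le> enc_struct \<Gamma>"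
  "a < length (aut_mult \<Gamma>) \<Longrightarrow> enc_nfa enc_pletter (aut_mult \<Gamma> ! a) \<le> enc_struct \<Gamma>"
proof -
  show "enc_nfa id (aut_L \<Gamma>) \<le> enc_struct \<Gamma>" "enc_nfa enc_pletter (aut_eq \<Gamma>) \<le> enc_struct \<Gamma>"
    unfolding enc_struct_def by (simp_all add: elem_le_list_encode del: list_encode.simps)
  assume "a < length (aut_mult \<Gamma>)"
  then have "enc_nfa enc_pletter (aut_mult \<Gamma> ! a) \<le> list_encode (map (enc_nfa enc_pletter) (aut_mult \<Gamma>))"
    by (intro elem_le_list_encode) simp
  also have "\<dots> \<le> enc_struct \<Gamma>"
    unfolding enc_struct_def by (simp add: elem_le_list_encode del: list_encode.simps)
  finally show "enc_nfa enc_pletter (aut_mult \<Gamma> ! a) \<le> enc_struct \<Gamma>" .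
qed

section \<open>Right cancellativity and cancellation witnesses\<close>

definition right_cancellable :: "'a set \<Rightarrow> ('a \<Rightarrow> 'a \<Rightarrow> 'a) \<Rightarrow> 'a \<Rightarrow> bool" where
  "right_cancellable S mult s \<longleftrightarrow> (\<forall>x\<in>S. \<forall>y\<in>S. mult x s = mult y s \<longrightarrow> x = y)"

lemma right_cancellative_iff_cancellable:
  "right_cancellative S mult \<longleftrightarrow> (\<forall>s\<in>S. right_cancellable S mult s)"
  by (auto simp: right_cancellative_def right_cancellable_def)

lemma right_cancellable_mult:
  assumes S: "semigroup_on S mult" "s \<in> S" "t \<in> S"
    and s: "right_cancellable S mult s" and t: "right_cancellable S mult t"
  shows "right_cancellable S mult (mult s t)"
  unfolding right_cancellable_def
proof (intro ballI impI)
  fix x y assume xy: "x \<in> S" "y \<in> S" and eq: "mult x (mult s t) = mult y (mult s t)"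
  then have "mult (mult x s) t = mult (mult y s) t"
    using S by (simp add: semigroup_on_def)
  moreover have "mult x s \<in> S" "mult y s \<in> S"
    using S xy by (simp_all add: semigroup_on_def)
  ultimately have "mult x s = mult y s"
    using t unfolding right_cancellable_def by blast
  then show "x = y"
    using s xy unfolding right_cancellable_def by blast
qed

definition cancellation_witness :: "pre_struct \<Rightarrow> nat \<Rightarrow> nat list \<Rightarrow> nat list \<Rightarrow> nat list \<Rightarrow> bool" where
  "cancellation_witness \<Gamma> a u v w \<longleftrightarrow>
     u \<in> nfa_lang (aut_L \<Gamma>) \<and> v \<in> nfa_lang (aut_L \<Gamma>) \<and> w \<in> nfa_lang (aut_L \<Gamma>)
   \<and> (u, w) \<in> sync_rel (aut_mult \<Gamma> ! a) \<and> (v, w) \<in> sync_rel (aut_mult \<Gamma> ! a)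
   \<and> (u, v) \<notin> sync_rel (aut_eq \<Gamma>)"

context
  fixes \<Gamma> :: pre_struct and S :: "'a set" and mult and \<sigma>
  assumes semigroup: "semigroup_on S mult" and pre: "pre_automatic \<Gamma>"
    and interp: "is_interpretation \<Gamma> S mult \<sigma>"
begin

lemma interp_in_carrier: "w \<in> lists {..<alph \<Gamma>} \<Longrightarrow> w \<noteq> [] \<Longrightarrow> \<sigma> w \<in> S"
  using interp by (simp add: is_interpretation_def Let_def)

lemma interp_append:
  "u \<in> lists {..<alph \<Gamma>} \<Longrightarrow> v \<in> lists {..<alph \<Gamma>} \<Longrightarrow> u \<noteq> [] \<Longrightarrow> v \<noteq> []
    \<Longrightarrow> \<sigma> (u @ v) = mult (\<sigma> u) (\<sigma> v)"
  using interp by (simp add: is_interpretation_def Let_def)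

lemma interp_image: "\<sigma> ` nfa_lang (aut_L \<Gamma>) = S"
  using interp by (simp add: is_interpretation_def Let_def)

lemma interp_eq:
  "u \<in> nfa_lang (aut_L \<Gamma>) \<Longrightarrow> v \<in> nfa_lang (aut_L \<Gamma>) \<Longrightarrow> (u, v) \<in> sync_rel (aut_eq \<Gamma>) \<longleftrightarrow> \<sigma> u = \<sigma> v"
  using interp by (simp add: is_interpretation_def Let_def)

lemma language_wordsD: "u \<in> nfa_lang (aut_L \<Gamma>) \<Longrightarrow> u \<in> lists {..<alph \<Gamma>} \<and> u \<noteq> []"
  using pre interp by (auto simp: pre_automatic_def is_interpretation_def Let_def)

lemma interp_mult:
  assumes "a < alph \<Gamma>" "u \<in> nfa_lang (aut_L \<Gamma>)" "v \<in> nfa_lang (aut_L \<Gamma>)"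
  shows "(u, v) \<in> sync_rel (aut_mult \<Gamma> ! a) \<longleftrightarrow> mult (\<sigma> u) (\<sigma> [a]) = \<sigma> v"
proof -
  have "\<sigma> (u @ [a]) = mult (\<sigma> u) (\<sigma> [a])"
    using assms language_wordsD by (simp add: interp_append)
  then show ?thesis
    using interp assms by (simp add: is_interpretation_def Let_def)
qed

lemma right_cancellable_interp:
  assumes generators: "\<And>a. a < alph \<Gamma> \<Longrightarrow> right_cancellable S mult (\<sigma> [a])"
  shows "w \<in> lists {..<alph \<Gamma>} \<Longrightarrow> w \<noteq> [] \<Longrightarrow> right_cancellable S mult (\<sigma> w)"
proof (induction w)
  case (Cons a w)
  show ?case
  proof (cases "w = []")
    case True
    with Cons.prems generators show ?thesis by simp
  next
    case False
    with Cons have "\<sigma> (a # w) = mult (\<sigma> [a]) (\<sigma> w)" "right_cancellable S mult (\<sigma> w)"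
      using interp_append[of "[a]" w] by simp_all
    with Cons.prems False show ?thesis
      by (simp add: right_cancellable_mult[OF semigroup] interp_in_carrier generators)
  qed
qed simp

lemma generator_right_cancellable_iff:
  assumes a: "a < alph \<Gamma>"
  shows "right_cancellable S mult (\<sigma> [a]) \<longleftrightarrow> \<not> (\<exists>u v w. cancellation_witness \<Gamma> a u v w)"
proof
  assume rc: "right_cancellable S mult (\<sigma> [a])"
  show "\<not> (\<exists>u v w. cancellation_witness \<Gamma> a u v w)"
  proof
    assume "\<exists>u v w. cancellation_witness \<Gamma> a u v w"
    then obtain u v w where W: "cancellation_witness \<Gamma> a u v w" by blast
    then have "mult (\<sigma> u) (\<sigma> [a]) = \<sigma> w" "mult (\<sigma> v) (\<sigma> [a]) = \<sigma> w"
      using a by (auto simp: cancellation_witness_def interp_mult)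
    moreover have "\<sigma> u \<in> S" "\<sigma> v \<in> S"
      using W interp_image by (auto simp: cancellation_witness_def)
    ultimately have "\<sigma> u = \<sigma> v"
      using rc unfolding right_cancellable_def by metis
    with W show False by (auto simp: cancellation_witness_def interp_eq)
  qed
next
  assume no_witness: "\<not> (\<exists>u v w. cancellation_witness \<Gamma> a u v w)"
  show "right_cancellable S mult (\<sigma> [a])"
    unfolding right_cancellable_def
  proof (intro ballI impI)
    fix x y assume "x \<in> S" "y \<in> S" and eq: "mult x (\<sigma> [a]) = mult y (\<sigma> [a])"
    then obtain u v where u: "u \<in> nfa_lang (aut_L \<Gamma>)" "x = \<sigma> u" and v: "v \<in> nfa_lang (aut_L \<Gamma>)" "y = \<sigma> v"
      using interp_image by blast
    have "mult x (\<sigma> [a]) \<in> S"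
      using semigroup \<open>x \<in> S\<close> interp_in_carrier a by (simp add: semigroup_on_def)
    then obtain w where w: "w \<in> nfa_lang (aut_L \<Gamma>)" "\<sigma> w = mult x (\<sigma> [a])"
      using interp_image by (metis imageE)
    have "(u, w) \<in> sync_rel (aut_mult \<Gamma> ! a)" "(v, w) \<in> sync_rel (aut_mult \<Gamma> ! a)"
      using u v w a eq by (simp_all add: interp_mult)
    then have "(u, v) \<in> sync_rel (aut_eq \<Gamma>)"
      using no_witness u v w unfolding cancellation_witness_def by blast
    then show "x = y"
      using u v by (simp add: interp_eq)
  qed
qed

lemma right_cancellative_iff_no_witness:
  "right_cancellative S mult \<longleftrightarrow> \<not> (\<exists>a<alph \<Gamma>. \<exists>u v w. cancellation_witness \<Gamma> a u v w)"
proof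
  assume "right_cancellative S mult"
  then show "\<not> (\<exists>a<alph \<Gamma>. \<exists>u v w. cancellation_witness \<Gamma> a u v w)"
    using generator_right_cancellable_iff interp_in_carrier
    by (auto simp: right_cancellative_iff_cancellable)
next
  assume "\<not> (\<exists>a<alph \<Gamma>. \<exists>u v w. cancellation_witness \<Gamma> a u v w)"
  then have "right_cancellable S mult (\<sigma> [a])" if "a < alph \<Gamma>" for a
    using that generator_right_cancellable_iff by blast
  then have "right_cancellable S mult (\<sigma> w)" if "w \<in> nfa_lang (aut_L \<Gamma>)" for w
    using that language_wordsD right_cancellable_interp by blast
  then show "right_cancellative S mult"
    using interp_image by (auto simp: right_cancellative_iff_cancellable)
qed

end

section \<open>Short cancellation witnesses\<close>

definition excise :: "nat \<Rightarrow> nat \<Rightarrow> 'a list \<Rightarrow> 'a list" where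
  "excise i j xs = take i xs @ drop j xs"

lemma short_excision:
  assumes "finite X" and range: "\<And>xs. f xs \<in> X"
    and cong: "\<And>xs ys zs. f xs = f ys \<Longrightarrow> f (xs @ zs) = f (ys @ zs)"
    and closed: "\<And>xs i j. Q xs \<Longrightarrow> i < j \<Longrightarrow> j \<le> length xs \<Longrightarrow> Q (excise i j xs)"
  shows "Q xs \<Longrightarrow> \<exists>ys. Q ys \<and> f ys = f xs \<and> length ys \<le> card X"
proof (induction xs rule: length_induct)
  case (1 xs)
  show ?case
  proof (cases "length xs \<le> card X")
    case True
    with "1.prems" show ?thesis by blast
  next
    case False
    have "\<not> inj_on (\<lambda>p. f (take p xs)) {0..length xs}"
    proof
      assume "inj_on (\<lambda>p. f (take p xs)) {0..length xs}"
      then have "card {0..length xs} \<le> card X"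
        using card_inj_on_le[OF _ _ \<open>finite X\<close>] range by blast
      with False show False by simp
    qed
    then obtain p p' where "p \<le> length xs" "p' \<le> length xs" "p \<noteq> p'" "f (take p xs) = f (take p' xs)"
      unfolding inj_on_def by auto
    then obtain i j where ij: "i < j" "j \<le> length xs" and same: "f (take i xs) = f (take j xs)"
      by (metis linorder_neqE_nat)
    have "f (excise i j xs) = f xs"
      using cong[OF same, of "drop j xs"] by (simp add: excise_def)
    moreover have "Q (excise i j xs)"
      using closed[OF "1.prems" ij] .
    moreover have "length (excise i j xs) < length xs"
      using ij by (simp add: excise_def)
    ultimately show ?thesis
      using "1.IH" by metis
  qed
qed

lemma nth_opt_excise:
  "i \<le> j \<Longrightarrow> nth_opt (excise i j xs) p = (if p < i then nth_opt xs p else nth_opt xs (p + (j - i)))"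
  by (auto simp: excise_def nth_opt_def nth_append min_def) (simp_all add: add.commute)

lemma nth_excise:
  "i \<le> j \<Longrightarrow> j \<le> length xs \<Longrightarrow> p < length (excise i j xs)
    \<Longrightarrow> excise i j xs ! p = (if p < i then xs ! p else xs ! (p + (j - i)))"
  by (auto simp: excise_def nth_append min_def add.commute)

lemma length_excise:
  "i \<le> j \<Longrightarrow> length (excise i j xs) = (if j \<le> length xs then length xs - (j - i) else min i (length xs))"
  by (auto simp: excise_def)

lemma max3_length_excise:
  fixes u v w :: "'a list"
  assumes "i \<le> j" "j \<le> max (length u) (max (length v) (length w))"
  shows "max (length (excise i j u)) (max (length (excise i j v)) (length (excise i j w)))
    = max (length u) (max (length v) (length w)) - (j - i)"
proof -
  define M where "M = max (length u) (max (length v) (length w))"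
  have le: "length (excise i j x) \<le> M - (j - i)" if "length x \<le> M" for x :: "'a list"
    using assms that by (auto simp: length_excise M_def)
  have eq: "length (excise i j x) = M - (j - i)" if "length x = M" for x :: "'a list"
    using assms that by (auto simp: length_excise M_def)
  have "length u = M \<or> length v = M \<or> length w = M"
    by (auto simp: M_def max_def)
  then show ?thesis
    using le[of u] le[of v] le[of w] eq[of u] eq[of v] eq[of w] unfolding M_def[symmetric]
    by (auto simp: M_def max_def)
qed

definition columns :: "'a list \<Rightarrow> 'a list \<Rightarrow> 'a list \<Rightarrow> ('a option \<times> 'a option \<times> 'a option) list" where
  "columns u v w =
     map (\<lambda>p. (nth_opt u p, nth_opt v p, nth_opt w p)) [0..<max (length u) (max (length v) (length w))]"

lemma excise_columns:
  assumes "i < j" "j \<le> length (columns u v w)"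
  shows "excise i j (columns u v w) = columns (excise i j u) (excise i j v) (excise i j w)"
proof -
  define N where "N = max (length u) (max (length v) (length w))"
  have len: "length (columns (excise i j u) (excise i j v) (excise i j w)) = N - (j - i)"
    using assms max3_length_excise[of i j u v w] by (simp add: columns_def N_def)
  show ?thesis
  proof (rule nth_equalityI)
    show "length (excise i j (columns u v w)) = length (columns (excise i j u) (excise i j v) (excise i j w))"
      using assms len by (simp add: length_excise columns_def N_def)
    fix p assume "p < length (excise i j (columns u v w))"
    moreover from this have "p < N - (j - i)" "p + (j - i) < N"
      using assms by (simp_all add: length_excise columns_def N_def)
    ultimately show "excise i j (columns u v w) ! p = columns (excise i j u) (excise i j v) (excise i j w) ! p"
      using assms len by (simp add: nth_excise nth_opt_excise columns_def N_def[symmetric])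
  qed
qed

definition somes :: "'a option list \<Rightarrow> 'a list" where
  "somes xs = [x. Some x \<leftarrow> xs]"

lemma somes_append: "somes (xs @ ys) = somes xs @ somes ys"
  by (simp add: somes_def)

lemma somes_map_Some: "somes (map Some xs) = xs"
  by (induction xs) (simp_all add: somes_def)

lemma somes_map_None: "somes (map (\<lambda>_. None) xs) = []"
  by (induction xs) (simp_all add: somes_def)

lemma somes_map_upt:
  assumes "n \<le> N" and "\<And>p. p < n \<Longrightarrow> f p = Some (g p)" and "\<And>p. n \<le> p \<Longrightarrow> p < N \<Longrightarrow> f p = None"
  shows "somes (map f [0..<N]) = map g [0..<n]"
proof -
  obtain k where N: "N = n + k"
    using assms(1) le_Suc_ex by blast
  have "map f [0..<n] = map Some (map g [0..<n])"
    using assms(2) by simp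
  moreover have "map f [n..<n + k] = map (\<lambda>_. None) [n..<n + k]"
    using assms(3) N by simp
  ultimately show ?thesis
    by (simp only: N upt_add_eq_append[of 0 n k] map_append somes_append somes_map_Some somes_map_None)
      simp
qed

lemma somes_map_nth_opt: "length u \<le> N \<Longrightarrow> somes (map (nth_opt u) [0..<N]) = u"
  using somes_map_upt[of "length u" N "nth_opt u" "nth u"] by (simp add: nth_opt_def map_nth)

definition pair_opt :: "'a option \<Rightarrow> 'b option \<Rightarrow> ('a option \<times> 'b option) option" where
  "pair_opt x y = (if x = None \<and> y = None then None else Some (x, y))"

lemma somes_map_pair_opt:
  "length u \<le> N \<Longrightarrow> length w \<le> N \<Longrightarrow> somes (map (\<lambda>p. pair_opt (nth_opt u p) (nth_opt w p)) [0..<N]) = conv u w"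
  unfolding conv_eq_map_nth_opt
  by (rule somes_map_upt) (auto simp: pair_opt_def nth_opt_def)

definition nfa_states :: "'l nfa \<Rightarrow> 'l list \<Rightarrow> nat set" where
  "nfa_states M w = nfa_reach (snd (snd M)) (set (fst M)) w"

lemma nfa_accepts_iff_states: "nfa_accepts M w \<longleftrightarrow> nfa_states M w \<inter> set (fst (snd M)) \<noteq> {}"
  by (cases M) (simp add: nfa_accepts_def nfa_states_def)

lemma nfa_states_append: "nfa_states M (xs @ ys) = nfa_reach (snd (snd M)) (nfa_states M xs) ys"
  by (simp add: nfa_states_def nfa_reach_append)

lemma nfa_reach_subset: "nfa_reach T Q w \<subseteq> Q \<union> (\<lambda>(p, a, q). q) ` set T"
proof (induction w arbitrary: Q)
  case (Cons a w)
  let ?Q' = "{q'. \<exists>q\<in>Q. (q, a, q') \<in> set T}"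
  have "?Q' \<subseteq> (\<lambda>(p, a, q). q) ` set T"
    by force
  then show ?case
    using Cons.IH[of ?Q'] by (simp only: nfa_reach.simps) blast
qed simp

lemma nfa_states_le_enc_nfa: "nfa_states M w \<subseteq> {..enc_nfa e M}"
proof -
  obtain I F T where M: "M = (I, F, T)" by (cases M)
  have outer: "x \<in> {list_encode I, list_encode F, enc_trans e T} \<Longrightarrow> x \<le> enc_nfa e M" for x
    unfolding M enc_nfa_eq by (rule elem_le_list_encode) simp
  have "q \<le> enc_nfa e M" if "q \<in> set I" for q
    using elem_le_list_encode[OF that] outer[of "list_encode I"] by simp
  moreover have "q \<le> enc_nfa e M" if "(p, a, q) \<in> set T" for p a q
  proof -
    have "q \<le> list_encode [p, e a, q]"
      by (rule elem_le_list_encode) simp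
    also have "\<dots> \<le> enc_trans e T"
      unfolding enc_trans_def using that by (intro elem_le_list_encode) force
    also have "\<dots> \<le> enc_nfa e M"
      by (rule outer) simp
    finally show ?thesis .
  qed
  ultimately show ?thesis
    using nfa_reach_subset[of T "set I" w] by (force simp: nfa_states_def M)
qed

(* A column (x, y, z) holds the letters of u, v, w at one position, None beyond the end of a
   word; each of the six runs skips the columns in which all of its tracks are None. *)
definition witness_states ::
  "nat nfa \<Rightarrow> pletter nfa \<Rightarrow> pletter nfa \<Rightarrow> (nat option \<times> nat option \<times> nat option) list
    \<Rightarrow> nat set \<times> nat set \<times> nat set \<times> nat set \<times> nat set \<times> nat set" where
  "witness_states ML Ma ME cs =
     (nfa_states ML (somes (map (\<lambda>(x, y, z). x) cs)),
      nfa_states ML (somes (map (\<lambda>(x, y, z). y) cs)),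
      nfa_states ML (somes (map (\<lambda>(x, y, z). z) cs)),
      nfa_states Ma (somes (map (\<lambda>(x, y, z). pair_opt x z) cs)),
      nfa_states Ma (somes (map (\<lambda>(x, y, z). pair_opt y z) cs)),
      nfa_states ME (somes (map (\<lambda>(x, y, z). pair_opt x y) cs)))"

lemma witness_states_columns:
  "witness_states ML Ma ME (columns u v w) =
     (nfa_states ML u, nfa_states ML v, nfa_states ML w,
      nfa_states Ma (conv u w), nfa_states Ma (conv v w), nfa_states ME (conv u v))"
proof -
  define N where "N = max (length u) (max (length v) (length w))"
  have "length u \<le> N" "length v \<le> N" "length w \<le> N"
    by (simp_all add: N_def)
  then show ?thesis
    unfolding witness_states_def columns_def N_def[symmetric] map_map comp_def prod.case
    by (simp only: somes_map_nth_opt somes_map_pair_opt)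
qed

lemma witness_states_append_cong:
  "witness_states ML Ma ME xs = witness_states ML Ma ME ys
    \<Longrightarrow> witness_states ML Ma ME (xs @ zs) = witness_states ML Ma ME (ys @ zs)"
  unfolding witness_states_def map_append somes_append nfa_states_append by simp

lemma short_cancellation_witness:
  assumes a: "a < length (aut_mult \<Gamma>)" and W: "cancellation_witness \<Gamma> a u v w"
  obtains u' v' w' where "cancellation_witness \<Gamma> a u' v' w'"
    and "length u' \<le> 2 ^ (6 * Suc (enc_struct \<Gamma>))" "length v' \<le> 2 ^ (6 * Suc (enc_struct \<Gamma>))"
    "length w' \<le> 2 ^ (6 * Suc (enc_struct \<Gamma>))"
proof -
  let ?c = "enc_struct \<Gamma>"
  let ?f = "witness_states (aut_L \<Gamma>) (aut_mult \<Gamma> ! a) (aut_eq \<Gamma>)"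
  let ?Q = "\<lambda>cs. \<exists>u v w. cs = columns u v w"
  \<comment> \<open>All states are bounded by the code of the input.\<close>
  define X where "X = Pow {..?c} \<times> Pow {..?c} \<times> Pow {..?c} \<times> Pow {..?c} \<times> Pow {..?c} \<times> Pow {..?c}"
  have "nfa_states (aut_L \<Gamma>) x \<subseteq> {..?c}" for x
    by (rule subset_trans[OF nfa_states_le_enc_nfa[where e = id]]) (simp add: enc_nfa_le_enc_struct)
  moreover have "nfa_states (aut_eq \<Gamma>) y \<subseteq> {..?c}" for y
    by (rule subset_trans[OF nfa_states_le_enc_nfa[where e = enc_pletter]]) (simp add: enc_nfa_le_enc_struct)
  moreover have "nfa_states (aut_mult \<Gamma> ! a) y \<subseteq> {..?c}" for y
    by (rule subset_trans[OF nfa_states_le_enc_nfa[where e = enc_pletter]]) (simp add: enc_nfa_le_enc_struct a)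
  ultimately have range: "?f cs \<in> X" for cs
    by (simp add: X_def witness_states_def)
  have "6 * Suc ?c = Suc ?c + (Suc ?c + (Suc ?c + (Suc ?c + (Suc ?c + Suc ?c))))"
    by simp
  then have card: "card X = 2 ^ (6 * Suc ?c)"
    by (simp only: X_def card_cartesian_product card_Pow finite_atMost card_atMost power_add)
  have closed: "?Q (excise i j cs)" if "?Q cs" "i < j" "j \<le> length cs" for cs i j
    using that excise_columns by blast
  have "finite X" "?Q (columns u v w)"
    by (auto simp: X_def)
  then obtain cs where "?Q cs" and same: "?f cs = ?f (columns u v w)" and short: "length cs \<le> card X"
    using short_excision[of X ?f ?Q, OF _ range witness_states_append_cong closed] by blast
  then obtain u' v' w' where cs: "cs = columns u' v' w'" by blast
  have "cancellation_witness \<Gamma> a u' v' w'"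
    using W same unfolding cs
    by (simp add: cancellation_witness_def nfa_lang_def sync_rel_def nfa_accepts_iff_states witness_states_columns)
  moreover have "length u' \<le> length cs" "length v' \<le> length cs" "length w' \<le> length cs"
    by (simp_all add: cs columns_def)
  ultimately show ?thesis
    using that short card by simp
qed

definition code_witness :: "nat \<Rightarrow> nat \<Rightarrow> nat \<Rightarrow> nat \<Rightarrow> nat \<Rightarrow> bool" where
  "code_witness c a i j l \<longleftrightarrow>
     code_accepts_word (code_nth c 1) i \<and> code_accepts_word (code_nth c 1) j \<and> code_accepts_word (code_nth c 1) l
   \<and> code_accepts_pair (code_nth (code_nth c 3) a) i l \<and> code_accepts_pair (code_nth (code_nth c 3) a) j l
   \<and> \<not> code_accepts_pair (code_nth c 2) i j"

lemma code_witness_iff: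
  "a < length (aut_mult \<Gamma>) \<Longrightarrow>
    code_witness (enc_struct \<Gamma>) a (list_encode u) (list_encode v) (list_encode w) \<longleftrightarrow> cancellation_witness \<Gamma> a u v w"
  by (simp add: code_witness_def cancellation_witness_def code_nth_enc_struct code_accepts_word_iff
      code_accepts_pair_iff nfa_lang_def del: One_nat_def)

definition witness_search_bound :: "nat \<Rightarrow> nat" where
  "witness_search_bound c = Suc (list_encode (replicate (2 ^ (6 * Suc c)) (code_nth c 0)))"

definition decide_right_cancellative :: "nat \<Rightarrow> nat" where
  "decide_right_cancellative c = of_bool (\<not> (\<exists>a<code_nth c 0.
     \<exists>i<witness_search_bound c. \<exists>j<witness_search_bound c. \<exists>l<witness_search_bound c. code_witness c a i j l))"

lemma computable1_decide_right_cancellative: "computable1 decide_right_cancellative"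
  unfolding decide_right_cancellative_def witness_search_bound_def code_witness_def
  by (intro computable_intros)

lemma list_encode_less_witness_search_bound:
  assumes "pre_automatic \<Gamma>" "x \<in> nfa_lang (aut_L \<Gamma>)" "length x \<le> 2 ^ (6 * Suc (enc_struct \<Gamma>))"
  shows "list_encode x < witness_search_bound (enc_struct \<Gamma>)"
proof -
  have "\<forall>y\<in>set x. y \<le> alph \<Gamma>"
    using assms(1,2) by (fastforce simp: pre_automatic_def)
  then show ?thesis
    using list_encode_le_replicate assms(3)
    by (simp add: witness_search_bound_def code_nth_enc_struct le_imp_less_Suc)
qed

lemma witness_search_iff:
  assumes pre: "pre_automatic \<Gamma>"
  defines "B \<equiv> witness_search_bound (enc_struct \<Gamma>)"
  shows "(\<exists>a<code_nth (enc_struct \<Gamma>) 0. \<exists>i<B. \<exists>j<B. \<exists>l<B. code_witness (enc_struct \<Gamma>) a i j l)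
    \<longleftrightarrow> (\<exists>a<alph \<Gamma>. \<exists>u v w. cancellation_witness \<Gamma> a u v w)" (is "?search \<longleftrightarrow> ?witness")
proof
  have alph: "code_nth (enc_struct \<Gamma>) 0 = alph \<Gamma>" "length (aut_mult \<Gamma>) = alph \<Gamma>"
    using pre by (simp_all add: code_nth_enc_struct pre_automatic_def)
  show "?search \<Longrightarrow> ?witness"
    using code_witness_iff[of _ \<Gamma> "list_decode _" "list_decode _" "list_decode _"] alph by fastforce
  assume ?witness
  then obtain a u v w where a: "a < alph \<Gamma>" and "cancellation_witness \<Gamma> a u v w"
    by blast
  then obtain u' v' w' where W: "cancellation_witness \<Gamma> a u' v' w'"
    and short: "length u' \<le> 2 ^ (6 * Suc (enc_struct \<Gamma>))" "length v' \<le> 2 ^ (6 * Suc (enc_struct \<Gamma>))"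
      "length w' \<le> 2 ^ (6 * Suc (enc_struct \<Gamma>))"
    using short_cancellation_witness alph by metis
  then have "list_encode u' < B" "list_encode v' < B" "list_encode w' < B"
    unfolding B_def cancellation_witness_def by (simp_all add: list_encode_less_witness_search_bound pre)
  moreover have "code_witness (enc_struct \<Gamma>) a (list_encode u') (list_encode v') (list_encode w')"
    using code_witness_iff W a alph by simp
  ultimately show ?search
    using a alph(1) by auto
qed

lemma decide_right_cancellative_correct:
  assumes "semigroup_on S mult" "automatic_structure_for \<Gamma> S mult"
  shows "decide_right_cancellative (enc_struct \<Gamma>) = of_bool (right_cancellative S mult)"
proof -
  obtain \<sigma> where pre: "pre_automatic \<Gamma>" and interp: "is_interpretation \<Gamma> S mult \<sigma>"
    using assms(2) unfolding automatic_structure_for_def by blast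
  show ?thesis
    unfolding decide_right_cancellative_def witness_search_iff[OF pre]
      right_cancellative_iff_no_witness[OF assms(1) pre interp] ..
qed

theorem corollary3p3:
  "\<exists>f :: recf. \<forall>(\<Gamma> :: pre_struct) (S :: 'a set) mult.
     semigroup_on S mult \<and> automatic_structure_for \<Gamma> S mult \<longrightarrow>
       eval f [enc_struct \<Gamma>] (if right_cancellative S mult then 1 else 0)"
proof -
  obtain f where f: "\<And>xs. length xs = 1 \<Longrightarrow> eval f xs (decide_right_cancellative (xs ! 0))"
    using computable1_decide_right_cancellative unfolding computable1_def computable_def by blast
  show ?thesis
  proof (intro exI allI impI)
    fix \<Gamma> :: pre_struct and S :: "'a set" and mult
    assume "semigroup_on S mult \<and> automatic_structure_for \<Gamma> S mult"
    then have "decide_right_cancellative (enc_struct \<Gamma>) = of_bool (right_cancellative S mult)"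
      by (simp add: decide_right_cancellative_correct)
    with f[of "[enc_struct \<Gamma>]"] have "eval f [enc_struct \<Gamma>] (of_bool (right_cancellative S mult))"
      by simp
    then show "eval f [enc_struct \<Gamma>] (if right_cancellative S mult then 1 else 0)"
      by (simp only: of_bool_def)
  qed
qed

end
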